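(* Let $\mathbb{M}=(M,+)$ be a commutative monoid with identity $0$ and let $A$ be an $\mathbb{M}$-RWTA over a graded alphabet $\Sigma$. Then there exists a sequential $\mathbb{M}$-RWTA $A'$ over $\Sigma$ such that $\mathbb{P}_A=\mathbb{P}_{A'}$, i.e. $\mathbb{P}_A(t)=\mathbb{P}_{A'}(t)$ for every tree $t\in T_\Sigma$.
   Context: A graded alphabet is a finite set $\Sigma=\bigcup_{k\in\mathbb{N}}\Sigma_k$, where $\Sigma_k$ is the set of symbols of arity $k$. The set $T_\Sigma$ of trees over $\Sigma$ is defined inductively: $f(t_1,\ldots,t_k)\in T_\Sigma$ whenever $f\in\Sigma_k$ and $t_1,\ldots,t_k\in T_\Sigma$. An $\mathbb{M}$-root-weighted tree automaton ($\mathbb{M}$-RWTA) is a tuple $A=(\Sigma,Q,\nu,\delta)$ where $Q$ is a finite set of states, $\nu:Q\to M$ is the root weight function, and $\delta\subseteq\bigcup_k Q\times\Sigma_k\times Q^k$ is the transition set. Write $\delta(f,q_1,\ldots,q_k)=\{q\mid (q,f,q_1,\ldots,q_k)\in\delta\}$, and for subsets $Q_1,\ldots,Q_k\subseteq Q$, $\delta(f,Q_1,\ldots,Q_k)=\bigcup_{(q_1,\ldots,q_k)\in Q_1\times\cdots\times Q_k}\delta(f,q_1,\ldots,q_k)$. For $S\subseteq Q$ put $\nu(S)=\sum_{s\in S}\nu(s)$ (so $\nu(\emptyset)=0$). Define $\Delta:T_\Sigma\to 2^Q$ by $\Delta(f(t_1,\ldots,t_k))=\delta(f,\Delta(t_1),\ldots,\Delta(t_k))$.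 The tree series realized by $A$ is the map $\mathbb{P}_A:T_\Sigma\to M$, $\mathbb{P}_A(t)=\nu(\Delta(t))$. The RWTA $A$ is sequential if $\mathrm{Card}(\Delta(t))\le 1$ for every $t\in T_\Sigma$. *)

theory Defs
  imports Main
begin

text \<open>Trees over a graded alphabet. A graded alphabet is a finite set of
  pairs (f, k) meaning that the symbol f belongs to the set of symbols of arity k.\<close>

datatype 'f tree = Node 'f "'f tree list"

type_synonym 'f graded_alphabet = "('f \<times> nat) set"

definition graded_alphabet :: "'f graded_alphabet \<Rightarrow> bool" where
  "graded_alphabet \<Sigma> \<longleftrightarrow> finite \<Sigma>"

inductive_set trees :: "'f graded_alphabet \<Rightarrow> 'f tree set" for \<Sigma> where
  "(f, length ts) \<in> \<Sigma> \<Longrightarrow> (\<forall>t\<in>set ts. t \<in> trees \<Sigma>) \<Longrightarrow> Node f ts \<in> trees \<Sigma>"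

text \<open>An M-RWTA (\<Sigma>, Q, \<nu>, \<delta>): Q finite state set, \<nu> the root weights (only its
  values on Q matter), \<delta> \<subseteq> \<Union>k. Q \<times> \<Sigma>_k \<times> Q^k, with a transition
  (q, f, [q1,...,qk]).\<close>

definition rwta :: "'f graded_alphabet \<Rightarrow> 's set \<Rightarrow> ('s \<Rightarrow> 'm) \<Rightarrow> ('s \<times> 'f \<times> 's list) set \<Rightarrow> bool" where
  "rwta \<Sigma> Q \<nu> \<delta> \<longleftrightarrow> graded_alphabet \<Sigma> \<and> finite Q \<and>
     (\<forall>(q, f, qs) \<in> \<delta>. q \<in> Q \<and> (f, length qs) \<in> \<Sigma> \<and> set qs \<subseteq> Q)"

definition delta_sets :: "('s \<times> 'f \<times> 's list) set \<Rightarrow> 'f \<Rightarrow> 's set list \<Rightarrow> 's set" where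
  "delta_sets \<delta> f Ss = {q. \<exists>qs. list_all2 (\<in>) qs Ss \<and> (q, f, qs) \<in> \<delta>}"

fun Delta :: "('s \<times> 'f \<times> 's list) set \<Rightarrow> 'f tree \<Rightarrow> 's set" where
  "Delta \<delta> (Node f ts) = delta_sets \<delta> f (map (Delta \<delta>) ts)"

definition series :: "('s \<Rightarrow> 'm::comm_monoid_add) \<Rightarrow> ('s \<times> 'f \<times> 's list) set \<Rightarrow> 'f tree \<Rightarrow> 'm" where
  "series \<nu> \<delta> t = sum \<nu> (Delta \<delta> t)"

definition sequential :: "'f graded_alphabet \<Rightarrow> ('s \<times> 'f \<times> 's list) set \<Rightarrow> bool" where
  "sequential \<Sigma> \<delta> \<longleftrightarrow> (\<forall>t \<in> trees \<Sigma>. card (Delta \<delta> t) \<le> 1)"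

end

theory Submission
  imports Defs
begin

text \<open>Subset construction: the states of the new automaton encode the sets \<open>\<Delta>(t) \<subseteq> Q\<close>,
  and a transition maps the codes of \<open>S\<^sub>1, \<dots>, S\<^sub>k\<close> to the code of \<open>\<delta>(f, S\<^sub>1, \<dots>, S\<^sub>k)\<close>.
  By induction on trees the new automaton reaches exactly the code of \<open>\<Delta>(t)\<close>, so it is
  sequential, and giving a code the root weight \<open>\<nu>\<close> of the set it encodes preserves the series.\<close>

lemma list_all2_in_map_singleton_iff:
  "list_all2 (\<in>) qs (map (\<lambda>x. {g x}) xs) \<longleftrightarrow> qs = map g xs"
  by (induction xs arbitrary: qs) (auto simp: list_all2_Cons2)

lemma delta_sets_map_singleton:
  "delta_sets \<delta> f (map (\<lambda>x. {g x}) xs) = {q. (q, f, map g xs) \<in> \<delta>}"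
  by (simp add: delta_sets_def list_all2_in_map_singleton_iff)

lemma delta_sets_subset_states:
  assumes "rwta \<Sigma> Q \<nu> \<delta>" shows "delta_sets \<delta> f Ss \<subseteq> Q"
  using assms by (auto simp: rwta_def delta_sets_def)

lemma Delta_subset_states:
  assumes "rwta \<Sigma> Q \<nu> \<delta>" shows "Delta \<delta> t \<subseteq> Q"
  using delta_sets_subset_states[OF assms] by (cases t) simp

definition subset_delta ::
    "('s set \<Rightarrow> 'q) \<Rightarrow> 'f graded_alphabet \<Rightarrow> 's set \<Rightarrow> ('s \<times> 'f \<times> 's list) set
      \<Rightarrow> ('q \<times> 'f \<times> 'q list) set" where
  "subset_delta e \<Sigma> Q \<delta> = {(e (delta_sets \<delta> f Ss), f, map e Ss) | f Ss.
      (f, length Ss) \<in> \<Sigma> \<and> set Ss \<subseteq> Pow Q}"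

lemma rwta_subset_delta:
  assumes "rwta \<Sigma> Q \<nu> \<delta>"
  shows "rwta \<Sigma> (e ` Pow Q) \<nu>' (subset_delta e \<Sigma> Q \<delta>)"
  using assms delta_sets_subset_states[OF assms]
  by (auto 0 4 simp: rwta_def subset_delta_def)

lemma subset_delta_iff:
  assumes "inj_on e (Pow Q)" and "set Ss \<subseteq> Pow Q"
  shows "(q, f, map e Ss) \<in> subset_delta e \<Sigma> Q \<delta> \<longleftrightarrow>
           (f, length Ss) \<in> \<Sigma> \<and> q = e (delta_sets \<delta> f Ss)"
proof
  assume "(q, f, map e Ss) \<in> subset_delta e \<Sigma> Q \<delta>"
  then obtain Ts where Ts: "q = e (delta_sets \<delta> f Ts)" "map e Ts = map e Ss"
      "(f, length Ts) \<in> \<Sigma>" "set Ts \<subseteq> Pow Q"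
    by (auto simp: subset_delta_def)
  have "set Ts \<union> set Ss \<subseteq> Pow Q" using Ts(4) assms(2) by simp
  then have "Ts = Ss" by (rule map_inj_on[OF Ts(2) inj_on_subset[OF assms(1)]])
  with Ts show "(f, length Ss) \<in> \<Sigma> \<and> q = e (delta_sets \<delta> f Ss)" by simp
next
  assume "(f, length Ss) \<in> \<Sigma> \<and> q = e (delta_sets \<delta> f Ss)"
  then show "(q, f, map e Ss) \<in> subset_delta e \<Sigma> Q \<delta>"
    using assms(2) unfolding subset_delta_def by auto
qed

lemma Delta_subset_delta:
  assumes "rwta \<Sigma> Q \<nu> \<delta>" and "inj_on e (Pow Q)" and "t \<in> trees \<Sigma>"
  shows "Delta (subset_delta e \<Sigma> Q \<delta>) t = {e (Delta \<delta> t)}"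
  using assms(3)
proof (induction t rule: trees.induct)
  case (1 f ts)
  have IH: "map (Delta (subset_delta e \<Sigma> Q \<delta>)) ts = map (\<lambda>t. {e (Delta \<delta> t)}) ts"
    using "1.IH" by simp
  have "Delta (subset_delta e \<Sigma> Q \<delta>) (Node f ts) =
      {q. (q, f, map e (map (Delta \<delta>) ts)) \<in> subset_delta e \<Sigma> Q \<delta>}"
    by (simp only: Delta.simps IH delta_sets_map_singleton) (simp add: comp_def)
  also have "\<dots> = {e (Delta \<delta> (Node f ts))}"
  proof -
    have "set (map (Delta \<delta>) ts) \<subseteq> Pow Q"
      using Delta_subset_states[OF assms(1)] by auto
    with "1.hyps" show ?thesis
      by (simp only: subset_delta_iff[OF assms(2)] length_map) simp
  qed
  finally show ?case .
qed

theorem theorem1: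
  fixes \<Sigma> :: "'f graded_alphabet"
    and Q :: "'s set" and \<nu> :: "'s \<Rightarrow> 'm::comm_monoid_add"
    and \<delta> :: "('s \<times> 'f \<times> 's list) set"
  assumes "rwta \<Sigma> Q \<nu> \<delta>"
  shows "\<exists>(Q' :: nat set) (\<nu>' :: nat \<Rightarrow> 'm) (\<delta>' :: (nat \<times> 'f \<times> nat list) set).
           rwta \<Sigma> Q' \<nu>' \<delta>' \<and> sequential \<Sigma> \<delta>' \<and>
           (\<forall>t \<in> trees \<Sigma>. series \<nu> \<delta> t = series \<nu>' \<delta>' t)"
proof -
  have "finite (Pow Q)" using assms by (simp add: rwta_def)
  then obtain e :: "'s set \<Rightarrow> nat" where e: "inj_on e (Pow Q)"
    using finite_imp_inj_to_nat_seg by blast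
  define \<nu>' where "\<nu>' = sum \<nu> \<circ> the_inv_into (Pow Q) e"
  let ?\<delta>' = "subset_delta e \<Sigma> Q \<delta>"
  have reach: "Delta ?\<delta>' t = {e (Delta \<delta> t)}" if "t \<in> trees \<Sigma>" for t
    using Delta_subset_delta[OF assms e that] .
  have "Delta \<delta> t \<in> Pow Q" for t
    using Delta_subset_states[OF assms] by simp
  then have "series \<nu> \<delta> t = series \<nu>' ?\<delta>' t" if "t \<in> trees \<Sigma>" for t
    by (simp add: series_def reach[OF that] \<nu>'_def the_inv_into_f_f[OF e])
  moreover have "sequential \<Sigma> ?\<delta>'" by (simp add: sequential_def reach)
  moreover have "rwta \<Sigma> (e ` Pow Q) \<nu>' ?\<delta>'" by (rule rwta_subset_delta[OF assms])
  ultimately show ?thesis by blast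
qed

end
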